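(* Let $\mu$ be a monotone system over $\{0,1\}^V$ and $\theta\in(0,1)$. Then the chain $P_{\mathrm{s\text{-}GD}}$ on $\Omega(\pi)$ is stochastically monotone.
   Context: Monotone system: for every $v$ and all feasible $\sigma\preceq\tau$ in $\{0,1\}^{V\setminus\{v\}}$ (coordinatewise), $\mu^\sigma_v(1)\le\mu^\tau_v(1)$. Tilted $(\theta*\mu)(\sigma)\propto\mu(\sigma)\theta^{\|\sigma\|_1}$. $\mathsf{lift}:\{0,1\}^V\to\{0,1,\star\}^V$ random: independently per coordinate $0\mapsto0$, $1\mapsto\star$ w.p. $1-\theta$, $1\mapsto1$ w.p. $\theta$; $\mathsf{contr}$: $0\mapsto0$, $1,\star\mapsto1$. $\pi$: law of $\mathsf{lift}(X)$, $X\sim\mu$, support $\Omega(\pi)$. $P_{\mathrm{s\text{-}GD}}$: from $X\in\Omega(\pi)$, pick $v$ uniformly; if $X_v=\star$ keep it; otherwise resample $X_v\in\{0,1\}$ from $(\theta*\mu)_v^{\sigma_{V\setminus\{v\}}}$ where $\sigma=\mathsf{contr}(X)$. Order $0<1<\star$, coordinatewise partial order. $P$ is stochastically monotone if $Pf$ is increasing for every increasing $f:\Omega(\pi)\to\mathbb R_{\ge0}$. *)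

theory Defs
  imports Complex_Main
begin

text \<open>Lifted spins: 0, 1 and star, ordered 0 < 1 < star.\<close>
datatype lspin = S0 | S1 | SS

lemma UNIV_lspin: "(UNIV :: lspin set) = {S0, S1, SS}"
  using lspin.exhaust by auto

instance lspin :: finite
  by standard (simp add: UNIV_lspin)

fun lrank :: "lspin \<Rightarrow> nat" where
  "lrank S0 = 0" | "lrank S1 = 1" | "lrank SS = 2"

definition conf_le :: "('v \<Rightarrow> lspin) \<Rightarrow> ('v \<Rightarrow> lspin) \<Rightarrow> bool" where
  "conf_le X Y = (\<forall>v. lrank (X v) \<le> lrank (Y v))"

text \<open>Contraction: 0 to 0, 1 and star to 1 (True encodes 1).\<close>
definition contr :: "('v \<Rightarrow> lspin) \<Rightarrow> ('v \<Rightarrow> bool)" where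
  "contr X = (\<lambda>v. X v \<noteq> S0)"

fun lift_coord_prob :: "real \<Rightarrow> bool \<Rightarrow> lspin \<Rightarrow> real" where
  "lift_coord_prob \<theta> False x = (if x = S0 then 1 else 0)"
| "lift_coord_prob \<theta> True x = (if x = S1 then \<theta> else if x = SS then 1 - \<theta> else 0)"

definition lift_prob :: "real \<Rightarrow> ('v::finite \<Rightarrow> bool) \<Rightarrow> ('v \<Rightarrow> lspin) \<Rightarrow> real" where
  "lift_prob \<theta> \<sigma> X = (\<Prod>v\<in>UNIV. lift_coord_prob \<theta> (\<sigma> v) (X v))"

text \<open>pi: law of lift(X) for X distributed according to mu.\<close>
definition piL :: "(('v::finite \<Rightarrow> bool) \<Rightarrow> real) \<Rightarrow> real \<Rightarrow> ('v \<Rightarrow> lspin) \<Rightarrow> real" where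
  "piL \<mu> \<theta> X = (\<Sum>\<sigma>\<in>UNIV. \<mu> \<sigma> * lift_prob \<theta> \<sigma> X)"

definition Omega :: "(('v::finite \<Rightarrow> bool) \<Rightarrow> real) \<Rightarrow> real \<Rightarrow> ('v \<Rightarrow> lspin) set" where
  "Omega \<mu> \<theta> = {X. piL \<mu> \<theta> X > 0}"

definition tilt :: "(('v::finite \<Rightarrow> bool) \<Rightarrow> real) \<Rightarrow> real \<Rightarrow> ('v \<Rightarrow> bool) \<Rightarrow> real" where
  "tilt \<mu> \<theta> \<sigma> = \<mu> \<sigma> * \<theta> ^ card {u. \<sigma> u}
      / (\<Sum>\<tau>\<in>UNIV. \<mu> \<tau> * \<theta> ^ card {u. \<tau> u})"

text \<open>The pinning sigma on V minus v (represented by a full configuration whose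
  v-coordinate is ignored) is feasible iff its marginal probability is positive.\<close>
definition cond_feasible :: "(('v \<Rightarrow> bool) \<Rightarrow> real) \<Rightarrow> 'v \<Rightarrow> ('v \<Rightarrow> bool) \<Rightarrow> bool" where
  "cond_feasible \<mu> v \<sigma> = (\<mu> (\<sigma>(v := False)) + \<mu> (\<sigma>(v := True)) > 0)"

definition cond_prob1 :: "(('v \<Rightarrow> bool) \<Rightarrow> real) \<Rightarrow> 'v \<Rightarrow> ('v \<Rightarrow> bool) \<Rightarrow> real" where
  "cond_prob1 \<mu> v \<sigma> = \<mu> (\<sigma>(v := True)) / (\<mu> (\<sigma>(v := False)) + \<mu> (\<sigma>(v := True)))"

definition monotone_system :: "(('v \<Rightarrow> bool) \<Rightarrow> real) \<Rightarrow> bool" where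
  "monotone_system \<mu> = (\<forall>v \<sigma> \<tau>. (\<forall>u. u \<noteq> v \<longrightarrow> \<sigma> u \<le> \<tau> u)
      \<and> cond_feasible \<mu> v \<sigma> \<and> cond_feasible \<mu> v \<tau>
      \<longrightarrow> cond_prob1 \<mu> v \<sigma> \<le> cond_prob1 \<mu> v \<tau>)"

definition sgd_local :: "(('v::finite \<Rightarrow> bool) \<Rightarrow> real) \<Rightarrow> real \<Rightarrow> 'v
    \<Rightarrow> ('v \<Rightarrow> lspin) \<Rightarrow> ('v \<Rightarrow> lspin) \<Rightarrow> real" where
  "sgd_local \<mu> \<theta> v X Y =
    (if X v = SS then (if Y = X then 1 else 0)
     else if (\<forall>u. u \<noteq> v \<longrightarrow> Y u = X u) then
       (let p = cond_prob1 (tilt \<mu> \<theta>) v (contr X) in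
        (case Y v of S1 \<Rightarrow> p | S0 \<Rightarrow> 1 - p | SS \<Rightarrow> 0))
     else 0)"

definition P_sgd :: "(('v::finite \<Rightarrow> bool) \<Rightarrow> real) \<Rightarrow> real
    \<Rightarrow> ('v \<Rightarrow> lspin) \<Rightarrow> ('v \<Rightarrow> lspin) \<Rightarrow> real" where
  "P_sgd \<mu> \<theta> X Y = (\<Sum>v\<in>UNIV. sgd_local \<mu> \<theta> v X Y) / real (card (UNIV :: 'v set))"

definition stoch_monotone :: "('v \<Rightarrow> lspin) set
    \<Rightarrow> (('v \<Rightarrow> lspin) \<Rightarrow> ('v \<Rightarrow> lspin) \<Rightarrow> real) \<Rightarrow> bool" where
  "stoch_monotone Om P = (\<forall>f :: ('v \<Rightarrow> lspin) \<Rightarrow> real.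
      (\<forall>X\<in>Om. 0 \<le> f X) \<and> (\<forall>X\<in>Om. \<forall>Y\<in>Om. conf_le X Y \<longrightarrow> f X \<le> f Y)
      \<longrightarrow> (\<forall>X\<in>Om. \<forall>Y\<in>Om. conf_le X Y \<longrightarrow>
             (\<Sum>Z\<in>Om. P X Z * f Z) \<le> (\<Sum>Z\<in>Om. P Y Z * f Z)))"

end

theory Submission
  imports Defs
begin

text \<open>Off the starred sites the chain performs a heat-bath update of the tilted measure
  \<open>\<theta> * \<mu>\<close> given \<open>contr X\<close>. Tilting multiplies every single-site odds ratio by \<open>\<theta>\<close>, so
  \<open>\<theta> * \<mu>\<close> is again a monotone system and the probability of writing a 1 at \<open>v\<close> increases
  with \<open>X\<close>. Coupling the two single-site updates through one uniform variable gives the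
  comparison, a star at \<open>v\<close> in the larger state dominating both outcomes of the smaller one;
  averaging over \<open>v\<close> preserves it. Since \<open>\<Omega>(\<pi>) = {X. \<mu> (contr X) > 0}\<close>, every outcome
  of positive probability stays in \<open>\<Omega>(\<pi>)\<close>, where \<open>f\<close> is monotone.\<close>

lemma lift_prob_contr_pos:
  assumes "0 < \<theta>" "\<theta> < 1"
  shows "0 < lift_prob \<theta> (contr X) X"
  unfolding lift_prob_def
proof (rule prod_pos)
  fix v
  show "0 < lift_coord_prob \<theta> (contr X v) (X v)"
    using assms by (cases "X v") (auto simp: contr_def)
qed

lemma lift_prob_eq_0:
  assumes "\<sigma> \<noteq> contr X"
  shows "lift_prob \<theta> \<sigma> X = 0"
proof -
  obtain v where "\<sigma> v \<noteq> contr X v" using assms by blast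
  then have "lift_coord_prob \<theta> (\<sigma> v) (X v) = 0"
    by (cases "X v"; cases "\<sigma> v") (auto simp: contr_def)
  then show ?thesis
    unfolding lift_prob_def by (intro prod_zero) auto
qed

lemma piL_eq: "piL \<mu> \<theta> X = \<mu> (contr X) * lift_prob \<theta> (contr X) X"
proof -
  have "piL \<mu> \<theta> X = (\<Sum>\<sigma>\<in>UNIV. if \<sigma> = contr X then \<mu> \<sigma> * lift_prob \<theta> \<sigma> X else 0)"
    unfolding piL_def by (intro sum.cong) (auto simp: lift_prob_eq_0)
  then show ?thesis by simp
qed

lemma mem_Omega_iff:
  assumes "\<forall>\<sigma>. 0 \<le> \<mu> \<sigma>" "0 < \<theta>" "\<theta> < 1"
  shows "X \<in> Omega \<mu> \<theta> \<longleftrightarrow> 0 < \<mu> (contr X)"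
  using lift_prob_contr_pos[OF assms(2,3), of X] assms(1)
  by (simp add: Omega_def piL_eq zero_less_mult_iff)

lemma contr_upd_S1: "contr (X(v := S1)) = (contr X)(v := True)"
  by (auto simp: contr_def)

lemma contr_upd_S0: "contr (X(v := S0)) = (contr X)(v := False)"
  by (auto simp: contr_def)

lemma contr_mono: "conf_le X Y \<Longrightarrow> contr X u \<le> contr Y u"
  unfolding conf_le_def contr_def
  by (erule allE[of _ u]) (cases "X u"; cases "Y u"; simp)

lemma card_upd_True:
  fixes \<sigma> :: "'v::finite \<Rightarrow> bool"
  shows "card {u. (\<sigma>(v := True)) u} = Suc (card {u. (\<sigma>(v := False)) u})"
proof -
  have "{u. (\<sigma>(v := True)) u} = insert v {u. (\<sigma>(v := False)) u}" by auto
  then show ?thesis by simp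
qed

lemma frac_le_frac_iff_cross:
  fixes a b a' b' :: real
  assumes "0 \<le> a" "0 \<le> b" "0 \<le> a'" "0 \<le> b'" "0 < b + a" "0 < b' + a'"
  shows "a / (b + a) \<le> a' / (b' + a') \<longleftrightarrow> a * b' \<le> a' * b"
  using assms by (simp add: field_simps algebra_simps)

lemma pos_add_scaled_iff:
  fixes a b \<theta> :: real
  assumes "0 \<le> a" "0 \<le> b" "0 < \<theta>"
  shows "0 < b + \<theta> * a \<longleftrightarrow> 0 < b + a"
proof (cases "a = 0")
  case False
  then have "0 < \<theta> * a" using assms by simp
  then show ?thesis using assms False by linarith
qed simp

lemma tilt_nonneg: "\<forall>\<sigma>. 0 \<le> \<mu> \<sigma> \<Longrightarrow> 0 \<le> \<theta> \<Longrightarrow> \<forall>\<sigma>. 0 \<le> tilt \<mu> \<theta> \<sigma>"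
  unfolding tilt_def by (intro allI divide_nonneg_nonneg sum_nonneg mult_nonneg_nonneg) auto

lemma tilt_pos_imp_pos: "\<forall>\<sigma>. 0 \<le> \<mu> \<sigma> \<Longrightarrow> 0 < tilt \<mu> \<theta> \<sigma> \<Longrightarrow> 0 < \<mu> \<sigma>"
  unfolding tilt_def by (metis div_0 less_eq_real_def mult_zero_left)

lemma tilt_normaliser_pos:
  fixes \<mu> :: "('v::finite \<Rightarrow> bool) \<Rightarrow> real"
  assumes "\<forall>\<sigma>. 0 \<le> \<mu> \<sigma>" "0 < \<theta>" "0 < \<mu> \<sigma>"
  shows "0 < (\<Sum>\<tau>\<in>UNIV. \<mu> \<tau> * \<theta> ^ card {u. \<tau> u})"
  using assms by (intro sum_pos2[where i = \<sigma>]) simp_all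

lemma tilt_upd:
  fixes \<mu> :: "('v::finite \<Rightarrow> bool) \<Rightarrow> real"
  assumes nonneg: "\<forall>\<sigma>. 0 \<le> \<mu> \<sigma>" and "0 < \<theta>"
  obtains w where "0 \<le> w" and "cond_feasible \<mu> v \<sigma> \<Longrightarrow> 0 < w"
    and "tilt \<mu> \<theta> (\<sigma>(v := False)) = w * \<mu> (\<sigma>(v := False))"
    and "tilt \<mu> \<theta> (\<sigma>(v := True)) = w * (\<theta> * \<mu> (\<sigma>(v := True)))"
proof
  define Z where "Z = (\<Sum>\<tau>\<in>UNIV. \<mu> \<tau> * \<theta> ^ card {u. \<tau> u})"
  show "0 \<le> \<theta> ^ card {u. (\<sigma>(v := False)) u} / Z"
    unfolding Z_def using nonneg \<open>0 < \<theta>\<close> by (simp add: sum_nonneg)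
  show "0 < \<theta> ^ card {u. (\<sigma>(v := False)) u} / Z" if "cond_feasible \<mu> v \<sigma>"
  proof -
    have "0 < \<mu> (\<sigma>(v := False)) \<or> 0 < \<mu> (\<sigma>(v := True))"
      using that nonneg by (auto simp: cond_feasible_def dest: add_nonpos_nonpos)
    then have "0 < Z"
      unfolding Z_def using tilt_normaliser_pos[OF nonneg \<open>0 < \<theta>\<close>] by blast
    then show ?thesis using \<open>0 < \<theta>\<close> by simp
  qed
  show "tilt \<mu> \<theta> (\<sigma>(v := False)) = \<theta> ^ card {u. (\<sigma>(v := False)) u} / Z * \<mu> (\<sigma>(v := False))"
    and "tilt \<mu> \<theta> (\<sigma>(v := True)) = \<theta> ^ card {u. (\<sigma>(v := False)) u} / Z * (\<theta> * \<mu> (\<sigma>(v := True)))"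
    unfolding tilt_def Z_def card_upd_True by (simp_all add: mult_ac del: fun_upd_apply)
qed

lemma cond_feasible_tilt_iff:
  fixes \<mu> :: "('v::finite \<Rightarrow> bool) \<Rightarrow> real"
  assumes nonneg: "\<forall>\<sigma>. 0 \<le> \<mu> \<sigma>" and "0 < \<theta>"
  shows "cond_feasible (tilt \<mu> \<theta>) v \<sigma> \<longleftrightarrow> cond_feasible \<mu> v \<sigma>"
proof -
  define a where "a = \<mu> (\<sigma>(v := True))"
  define b where "b = \<mu> (\<sigma>(v := False))"
  obtain w where w: "0 \<le> w" "cond_feasible \<mu> v \<sigma> \<Longrightarrow> 0 < w"
    and tilted: "tilt \<mu> \<theta> (\<sigma>(v := False)) = w * b" "tilt \<mu> \<theta> (\<sigma>(v := True)) = w * (\<theta> * a)"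
    using tilt_upd[OF assms] unfolding a_def b_def by metis
  have ab: "0 \<le> a" "0 \<le> b" using nonneg by (simp_all add: a_def b_def)
  have "cond_feasible (tilt \<mu> \<theta>) v \<sigma> \<longleftrightarrow> 0 < w * (b + \<theta> * a)"
    by (simp add: cond_feasible_def tilted distrib_left)
  also have "\<dots> \<longleftrightarrow> cond_feasible \<mu> v \<sigma>"
    using w pos_add_scaled_iff[OF ab \<open>0 < \<theta>\<close>] by (auto simp: cond_feasible_def a_def b_def zero_less_mult_iff)
  finally show ?thesis .
qed

lemma cond_prob1_tilt:
  fixes \<mu> :: "('v::finite \<Rightarrow> bool) \<Rightarrow> real"
  assumes "\<forall>\<sigma>. 0 \<le> \<mu> \<sigma>" "0 < \<theta>" "cond_feasible \<mu> v \<sigma>"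
  shows "cond_prob1 (tilt \<mu> \<theta>) v \<sigma>
    = \<theta> * \<mu> (\<sigma>(v := True)) / (\<mu> (\<sigma>(v := False)) + \<theta> * \<mu> (\<sigma>(v := True)))"
proof -
  obtain w where "0 < w"
    and "tilt \<mu> \<theta> (\<sigma>(v := False)) = w * \<mu> (\<sigma>(v := False))"
    and "tilt \<mu> \<theta> (\<sigma>(v := True)) = w * (\<theta> * \<mu> (\<sigma>(v := True)))"
    using tilt_upd[OF assms(1,2)] assms(3) by metis
  then show ?thesis
    by (simp add: cond_prob1_def distrib_left[symmetric])
qed

lemma monotone_system_tilt:
  fixes \<mu> :: "('v::finite \<Rightarrow> bool) \<Rightarrow> real"
  assumes nonneg: "\<forall>\<sigma>. 0 \<le> \<mu> \<sigma>" and "0 < \<theta>" and "monotone_system \<mu>"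
  shows "monotone_system (tilt \<mu> \<theta>)"
  unfolding monotone_system_def
proof (intro allI impI, elim conjE)
  fix v \<sigma> \<tau>
  assume le: "\<forall>u. u \<noteq> v \<longrightarrow> \<sigma> u \<le> \<tau> u"
    and "cond_feasible (tilt \<mu> \<theta>) v \<sigma>" "cond_feasible (tilt \<mu> \<theta>) v \<tau>"
  then have feasible: "cond_feasible \<mu> v \<sigma>" "cond_feasible \<mu> v \<tau>"
    using cond_feasible_tilt_iff[OF nonneg \<open>0 < \<theta>\<close>] by blast+
  define a where "a = \<mu> (\<sigma>(v := True))"
  define b where "b = \<mu> (\<sigma>(v := False))"
  define a' where "a' = \<mu> (\<tau>(v := True))"
  define b' where "b' = \<mu> (\<tau>(v := False))"
  have signs: "0 \<le> a" "0 \<le> b" "0 \<le> a'" "0 \<le> b'" "0 < b + a" "0 < b' + a'"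
    using nonneg feasible by (simp_all add: a_def b_def a'_def b'_def cond_feasible_def)
  have "a / (b + a) \<le> a' / (b' + a')"
    using \<open>monotone_system \<mu>\<close> le feasible
    unfolding monotone_system_def cond_prob1_def a_def b_def a'_def b'_def by (simp add: add.commute)
  then have "a * b' \<le> a' * b"
    using frac_le_frac_iff_cross[OF signs] by blast
  then have "(\<theta> * a) * b' \<le> (\<theta> * a') * b"
    using \<open>0 < \<theta>\<close> by (simp add: mult.assoc)
  moreover have "0 < b + \<theta> * a" "0 < b' + \<theta> * a'"
    using signs \<open>0 < \<theta>\<close> by (simp_all add: pos_add_scaled_iff)
  ultimately show "cond_prob1 (tilt \<mu> \<theta>) v \<sigma> \<le> cond_prob1 (tilt \<mu> \<theta>) v \<tau>"
    using frac_le_frac_iff_cross[of "\<theta> * a" b "\<theta> * a'" b'] signs \<open>0 < \<theta>\<close>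
    by (simp add: cond_prob1_tilt[OF nonneg \<open>0 < \<theta>\<close> feasible(1)]
        cond_prob1_tilt[OF nonneg \<open>0 < \<theta>\<close> feasible(2)] a_def b_def a'_def b'_def)
qed

lemma cond_prob1_nonneg: "\<forall>\<sigma>. 0 \<le> \<nu> \<sigma> \<Longrightarrow> 0 \<le> cond_prob1 \<nu> v \<sigma>"
  unfolding cond_prob1_def by simp

lemma cond_prob1_le_1:
  assumes "\<forall>\<sigma>. 0 \<le> \<nu> \<sigma>"
  shows "cond_prob1 \<nu> v \<sigma> \<le> 1"
proof -
  have "0 \<le> \<nu> (\<sigma>(v := False))" "0 \<le> \<nu> (\<sigma>(v := True))" using assms by blast+
  then show ?thesis unfolding cond_prob1_def by (auto simp: divide_le_eq_1)
qed

lemma cond_prob1_pos_imp: "\<forall>\<sigma>. 0 \<le> \<nu> \<sigma> \<Longrightarrow> 0 < cond_prob1 \<nu> v \<sigma> \<Longrightarrow> 0 < \<nu> (\<sigma>(v := True))"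
  unfolding cond_prob1_def by (metis div_0 less_eq_real_def)

lemma cond_prob1_less_1_imp:
  "\<forall>\<sigma>. 0 \<le> \<nu> \<sigma> \<Longrightarrow> cond_feasible \<nu> v \<sigma> \<Longrightarrow> cond_prob1 \<nu> v \<sigma> < 1 \<Longrightarrow> 0 < \<nu> (\<sigma>(v := False))"
  unfolding cond_prob1_def cond_feasible_def by (metis less_eq_real_def add_0 div_self less_irrefl)

lemma cond_feasible_of_pos: "\<forall>\<sigma>. 0 \<le> \<nu> \<sigma> \<Longrightarrow> 0 < \<nu> \<sigma> \<Longrightarrow> cond_feasible \<nu> v \<sigma>"
  unfolding cond_feasible_def by (cases "\<sigma> v") (auto simp: add_pos_nonneg add_nonneg_pos fun_upd_idem)

lemma cond_prob1_tilt_contr: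
  fixes \<mu> :: "('v::finite \<Rightarrow> bool) \<Rightarrow> real" and v :: 'v
  assumes nonneg: "\<forall>\<sigma>. 0 \<le> \<mu> \<sigma>" and \<theta>: "0 < \<theta>" "\<theta> < 1" and X: "X \<in> Omega \<mu> \<theta>"
  defines "p \<equiv> cond_prob1 (tilt \<mu> \<theta>) v (contr X)"
  shows "0 \<le> p" and "p \<le> 1"
    and "0 < p \<Longrightarrow> X(v := S1) \<in> Omega \<mu> \<theta>"
    and "p < 1 \<Longrightarrow> X(v := S0) \<in> Omega \<mu> \<theta>"
proof -
  have nonneg_tilt: "\<forall>\<sigma>. 0 \<le> tilt \<mu> \<theta> \<sigma>"
    using tilt_nonneg[OF nonneg less_imp_le[OF \<theta>(1)]] .
  show "0 \<le> p" "p \<le> 1"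
    unfolding p_def by (rule cond_prob1_nonneg[OF nonneg_tilt], rule cond_prob1_le_1[OF nonneg_tilt])
  show "X(v := S1) \<in> Omega \<mu> \<theta>" if "0 < p"
  proof -
    have "0 < tilt \<mu> \<theta> ((contr X)(v := True))"
      using cond_prob1_pos_imp[OF nonneg_tilt] that unfolding p_def .
    then show ?thesis
      using tilt_pos_imp_pos[OF nonneg] mem_Omega_iff[OF nonneg \<theta>] by (simp add: contr_upd_S1)
  qed
  show "X(v := S0) \<in> Omega \<mu> \<theta>" if "p < 1"
  proof -
    have "cond_feasible (tilt \<mu> \<theta>) v (contr X)"
      using X nonneg \<theta> by (simp add: cond_feasible_tilt_iff cond_feasible_of_pos mem_Omega_iff)
    then have "0 < tilt \<mu> \<theta> ((contr X)(v := False))"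
      using cond_prob1_less_1_imp[OF nonneg_tilt] that unfolding p_def by blast
    then show ?thesis
      using tilt_pos_imp_pos[OF nonneg] mem_Omega_iff[OF nonneg \<theta>] by (simp add: contr_upd_S0)
  qed
qed

lemma cond_prob1_tilt_contr_mono:
  assumes nonneg: "\<forall>\<sigma>. 0 \<le> \<mu> \<sigma>" and "monotone_system \<mu>" and \<theta>: "0 < \<theta>" "\<theta> < 1"
    and X: "X \<in> Omega \<mu> \<theta>" and Y: "Y \<in> Omega \<mu> \<theta>" and XY: "conf_le X Y"
  shows "cond_prob1 (tilt \<mu> \<theta>) v (contr X) \<le> cond_prob1 (tilt \<mu> \<theta>) v (contr Y)"
proof -
  have feasible: "cond_feasible (tilt \<mu> \<theta>) v (contr W)" if "W \<in> Omega \<mu> \<theta>" for W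
    using that nonneg \<theta> by (simp add: cond_feasible_tilt_iff cond_feasible_of_pos mem_Omega_iff)
  show ?thesis
    using monotone_system_tilt[OF nonneg \<theta>(1) \<open>monotone_system \<mu>\<close>, unfolded monotone_system_def, rule_format]
      contr_mono[OF XY] feasible[OF X] feasible[OF Y]
    by blast
qed

lemma sum_sgd_local_star:
  assumes "X v = SS" "X \<in> A"
  shows "(\<Sum>Z\<in>A. sgd_local \<mu> \<theta> v X Z * f Z) = f X"
proof -
  have "(\<Sum>Z\<in>A. sgd_local \<mu> \<theta> v X Z * f Z) = (\<Sum>Z\<in>A. if Z = X then f Z else 0)"
    using assms(1) unfolding sgd_local_def by (intro sum.cong) auto
  also have "\<dots> = f X" using assms(2) by simp
  finally show ?thesis .
qed

lemma sum_sgd_local_spin: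
  assumes "\<forall>\<sigma>. 0 \<le> \<mu> \<sigma>" "0 < \<theta>" "\<theta> < 1" "X \<in> Omega \<mu> \<theta>" "X v \<noteq> SS"
  defines "p \<equiv> cond_prob1 (tilt \<mu> \<theta>) v (contr X)"
  shows "(\<Sum>Z\<in>Omega \<mu> \<theta>. sgd_local \<mu> \<theta> v X Z * f Z) = p * f (X(v := S1)) + (1 - p) * f (X(v := S0))"
proof -
  have "sgd_local \<mu> \<theta> v X Z * f Z
      = (if Z = X(v := S1) then p * f Z else 0) + (if Z = X(v := S0) then (1 - p) * f Z else 0)" for Z
  proof (cases "\<forall>u. u \<noteq> v \<longrightarrow> Z u = X u")
    case True
    then have "Z = X(v := Z v)" by auto
    moreover have "X(v := c) = X(v := d) \<longleftrightarrow> c = d" for c d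
      by (metis fun_upd_same)
    ultimately show ?thesis
      using assms(5) unfolding sgd_local_def p_def by (cases "Z v") (auto simp: Let_def)
  next
    case False
    then show ?thesis using assms(5) unfolding sgd_local_def by auto
  qed
  then have "(\<Sum>Z\<in>Omega \<mu> \<theta>. sgd_local \<mu> \<theta> v X Z * f Z)
      = (if X(v := S1) \<in> Omega \<mu> \<theta> then p * f (X(v := S1)) else 0)
        + (if X(v := S0) \<in> Omega \<mu> \<theta> then (1 - p) * f (X(v := S0)) else 0)"
    by (simp add: sum.distrib)
  moreover have "X(v := S1) \<notin> Omega \<mu> \<theta> \<Longrightarrow> p = 0" "X(v := S0) \<notin> Omega \<mu> \<theta> \<Longrightarrow> p = 1"
    using cond_prob1_tilt_contr[OF assms(1-4), of v, folded p_def] by (metis less_eq_real_def)+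
  ultimately show ?thesis by auto
qed

lemma two_point_mean_le:
  fixes p q x1 x0 y1 y0 :: real
  assumes "0 \<le> p" "p \<le> q" "q \<le> 1"
    and "0 < p \<Longrightarrow> x1 \<le> y1" "p < q \<Longrightarrow> x0 \<le> y1" "q < 1 \<Longrightarrow> x0 \<le> y0"
  shows "p * x1 + (1 - p) * x0 \<le> q * y1 + (1 - q) * y0"
proof -
  \<comment> \<open>The three terms are the events \<open>U < p\<close>, \<open>p \<le> U < q\<close>, \<open>q \<le> U\<close> for \<open>U\<close> uniform on \<open>[0, 1]\<close>.\<close>
  have "p * x1 \<le> p * y1"
    using assms(1,4) by (cases "p = 0") (simp_all add: mult_left_mono)
  moreover have "(q - p) * x0 \<le> (q - p) * y1"
    using assms(2,5) by (cases "p = q") (simp_all add: mult_left_mono)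
  moreover have "(1 - q) * x0 \<le> (1 - q) * y0"
    using assms(3,6) by (cases "q = 1") (simp_all add: mult_left_mono)
  ultimately show ?thesis by (simp add: algebra_simps)
qed

lemma conf_le_upd: "conf_le X Y \<Longrightarrow> lrank c \<le> lrank d \<Longrightarrow> conf_le (X(v := c)) (Y(v := d))"
  unfolding conf_le_def by auto

lemma sum_sgd_local_mono:
  fixes \<mu> :: "('v::finite \<Rightarrow> bool) \<Rightarrow> real"
  assumes nonneg: "\<forall>\<sigma>. 0 \<le> \<mu> \<sigma>" and "monotone_system \<mu>" and \<theta>: "0 < \<theta>" "\<theta> < 1"
    and f_mono: "\<forall>X\<in>Omega \<mu> \<theta>. \<forall>Y\<in>Omega \<mu> \<theta>. conf_le X Y \<longrightarrow> f X \<le> f Y"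
    and X: "X \<in> Omega \<mu> \<theta>" and Y: "Y \<in> Omega \<mu> \<theta>" and XY: "conf_le X Y"
  shows "(\<Sum>Z\<in>Omega \<mu> \<theta>. sgd_local \<mu> \<theta> v X Z * f Z) \<le> (\<Sum>Z\<in>Omega \<mu> \<theta>. sgd_local \<mu> \<theta> v Y Z * f Z)"
proof -
  define pX where "pX = cond_prob1 (tilt \<mu> \<theta>) v (contr X)"
  define pY where "pY = cond_prob1 (tilt \<mu> \<theta>) v (contr Y)"
  note pX = cond_prob1_tilt_contr[OF nonneg \<theta> X, of v, folded pX_def]
  note pY = cond_prob1_tilt_contr[OF nonneg \<theta> Y, of v, folded pY_def]
  have f_upd_mono: "f (X(v := c)) \<le> f (Y(v := d))"
    if "X(v := c) \<in> Omega \<mu> \<theta>" "Y(v := d) \<in> Omega \<mu> \<theta>" "lrank c \<le> lrank d" for c d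
    using f_mono that conf_le_upd[OF XY] by blast
  show ?thesis
  proof (cases "Y v = SS")
    case Y_star: True
    then have Y_upd: "Y(v := SS) = Y" by auto
    show ?thesis
    proof (cases "X v = SS")
      case True
      then show ?thesis using sum_sgd_local_star X Y Y_star XY f_mono by metis
    next
      case False
      have "pX * f (X(v := S1)) + (1 - pX) * f (X(v := S0)) \<le> 1 * f Y + (1 - 1) * f Y"
        using pX f_upd_mono[of _ SS] Y unfolding Y_upd by (intro two_point_mean_le) auto
      then show ?thesis
        using sum_sgd_local_spin[OF nonneg \<theta> X False] sum_sgd_local_star[OF Y_star Y]
        unfolding pX_def by simp
    qed
  next
    case False
    moreover have "lrank (X v) \<le> lrank (Y v)" using XY unfolding conf_le_def by blast
    ultimately have X_spin: "X v \<noteq> SS" by (cases "X v"; cases "Y v") auto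
    have "pX \<le> pY"
      unfolding pX_def pY_def by (rule cond_prob1_tilt_contr_mono[OF nonneg \<open>monotone_system \<mu>\<close> \<theta> X Y XY])
    then have "pX * f (X(v := S1)) + (1 - pX) * f (X(v := S0)) \<le> pY * f (Y(v := S1)) + (1 - pY) * f (Y(v := S0))"
      using pX pY f_upd_mono by (intro two_point_mean_le) auto
    then show ?thesis
      using sum_sgd_local_spin[OF nonneg \<theta> X X_spin] sum_sgd_local_spin[OF nonneg \<theta> Y False]
      unfolding pX_def pY_def by simp
  qed
qed

lemma sum_P_sgd:
  fixes \<mu> :: "('v::finite \<Rightarrow> bool) \<Rightarrow> real"
  shows "(\<Sum>Z\<in>A. P_sgd \<mu> \<theta> X Z * f Z)
    = (\<Sum>v\<in>UNIV. \<Sum>Z\<in>A. sgd_local \<mu> \<theta> v X Z * f Z) / real (card (UNIV :: 'v set))"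
  unfolding P_sgd_def
  by (simp add: sum_distrib_right sum_divide_distrib[symmetric] sum.swap[of _ A])

theorem lemma5p3:
  fixes \<mu> :: "('v::finite \<Rightarrow> bool) \<Rightarrow> real" and \<theta> :: real
  assumes "\<forall>\<sigma>. 0 \<le> \<mu> \<sigma>"
    and "(\<Sum>\<sigma>\<in>UNIV. \<mu> \<sigma>) = 1"
    and "monotone_system \<mu>"
    and "0 < \<theta>" and "\<theta> < 1"
  shows "stoch_monotone (Omega \<mu> \<theta>) (P_sgd \<mu> \<theta>)"
  unfolding stoch_monotone_def
proof (intro allI impI ballI, elim conjE)
  fix f :: "('v \<Rightarrow> lspin) \<Rightarrow> real" and X Y
  assume "\<forall>X\<in>Omega \<mu> \<theta>. \<forall>Y\<in>Omega \<mu> \<theta>. conf_le X Y \<longrightarrow> f X \<le> f Y"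
    and "X \<in> Omega \<mu> \<theta>" "Y \<in> Omega \<mu> \<theta>" "conf_le X Y"
  then have "(\<Sum>v\<in>UNIV. \<Sum>Z\<in>Omega \<mu> \<theta>. sgd_local \<mu> \<theta> v X Z * f Z)
      \<le> (\<Sum>v\<in>UNIV. \<Sum>Z\<in>Omega \<mu> \<theta>. sgd_local \<mu> \<theta> v Y Z * f Z)"
    using assms by (intro sum_mono sum_sgd_local_mono) auto
  then show "(\<Sum>Z\<in>Omega \<mu> \<theta>. P_sgd \<mu> \<theta> X Z * f Z) \<le> (\<Sum>Z\<in>Omega \<mu> \<theta>. P_sgd \<mu> \<theta> Y Z * f Z)"
    unfolding sum_P_sgd by (simp add: divide_right_mono)
qed

end
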